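(* Assume the target tube $\mathscr{T}_N$ is closed, $\mathcal{U}$ is compact, and each $f_k$ is continuous on $\mathcal{X}\times\mathcal{U}$. Let $\alpha\in[0,1]$, $k\in\mathbb{N}_{[0,N-1]}$, and let $\mathcal{E}\subseteq\mathcal{W}$ be a measurable set with $\mathbb{P}_w(w_t\in\mathcal{E})=\alpha^{1/(N-k)}$ for all $t\in\mathbb{N}_{[k,N-1]}$. Then $\mathcal{R}_k(\mathscr{T}_N,\mathcal{E})\subseteq\mathcal{L}_k(\alpha)$.
   Context: Fix $N\in\mathbb{N}$, $N>0$, and write $\mathbb{N}_{[a,b]}=\{a,a+1,\dots,b\}$. Consider the discrete-time system $x_{k+1}=f_k(x_k,u_k)+w_k$, $k=0,\dots,N-1$, with state $x_k\in\mathcal{X}\subseteq\mathbb{R}^n$, input $u_k\in\mathcal{U}\subseteq\mathbb{R}^m$, disturbance $w_k\in\mathcal{W}\subseteq\mathbb{R}^n$ with $0\in\mathcal{W}$, and $f_k:\mathcal{X}\times\mathcal{U}\to\mathcal{X}$. A target tube is a sequence $\mathscr{T}_N=[\mathcal{T}_0,\dots,\mathcal{T}_N]$ of subsets of $\mathcal{X}$; it is called closed (resp. convex) if every $\mathcal{T}_k$ is closed (resp. convex). In the stochastic setting, $w_0,\dots,w_{N-1}$ are i.i.d. random vectors with an absolutely continuous distribution $\mathbb{P}_w$ on $\mathcal{W}$. A Markov policy is a tuple $\pi=[\mu_0,\dots,\mu_{N-1}]$ of universally measurable maps $\mu_k:\mathcal{X}\to\mathcal{U}$; $\mathcal{M}$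 denotes the set of Markov policies. For $\pi\in\mathcal{M}$ and $x_k=y$, $\mathbb{P}^\pi_k(\cdot\,|\,y)$ denotes the probability law of $(x_{k+1},\dots,x_N)$ generated by $x_{t+1}=f_t(x_t,\mu_t(x_t))+w_t$. The stochastic $\alpha$-level reach set is $\mathcal{L}_k(\alpha)=\{y\in\mathcal{T}_k:\sup_{\pi\in\mathcal{M}}\mathbb{P}^\pi_k(\bigcap_{t=k+1}^N\{x_t\in\mathcal{T}_t\}\,|\,y)\ge\alpha\}$. For $\mathcal{E}\subseteq\mathcal{W}$ and $k\in\mathbb{N}_{[0,N-1]}$, the disturbance minimal reach set $\mathcal{R}_k(\mathscr{T}_N,\mathcal{E})$ is the set of $x_k\in\mathcal{T}_k$ for which there exist state-feedback laws $\nu_t:\mathcal{X}\to\mathcal{U}$, $t\in\mathbb{N}_{[k,N-1]}$ (no measurability required), such that for every disturbance sequence $w_k,\dots,w_{N-1}\in\mathcal{E}$ the trajectory $x_{t+1}=f_t(x_t,\nu_t(x_t))+w_t$ satisfies $x_t\in\mathcal{T}_t$ for all $t\in\mathbb{N}_{[k+1,N]}$; also $\mathcal{R}_N(\mathscr{T}_N,\mathcal{E})=\mathcal{T}_N$. *)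

theory Defs
  imports "HOL-Probability.Probability"
begin

definition univ_measurable_on ::
  "'a::topological_space set \<Rightarrow> ('a \<Rightarrow> 'b::topological_space) \<Rightarrow> bool" where
  "univ_measurable_on X g \<longleftrightarrow>
     (\<forall>M. prob_space M \<longrightarrow> sets M = sets (restrict_space borel X) \<longrightarrow>
          g \<in> completion M \<rightarrow>\<^sub>M borel)"

definition markov_policies ::
  "nat \<Rightarrow> 'a::topological_space set \<Rightarrow> 'b::topological_space set \<Rightarrow> (nat \<Rightarrow> 'a \<Rightarrow> 'b) set" where
  "markov_policies N X U =
     {\<pi>. \<forall>t<N. (\<forall>x\<in>X. \<pi> t x \<in> U) \<and> univ_measurable_on X (\<pi> t)}"

text \<open>Closed-loop trajectory started at x_k = y: traj f pol k y w j = x_(k+j),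
  with x_(t+1) = f t x_t (pol t x_t) + w t.\<close>
fun traj :: "(nat \<Rightarrow> 'a::plus \<Rightarrow> 'b \<Rightarrow> 'a) \<Rightarrow> (nat \<Rightarrow> 'a \<Rightarrow> 'b) \<Rightarrow> nat \<Rightarrow> 'a \<Rightarrow> (nat \<Rightarrow> 'a) \<Rightarrow> nat \<Rightarrow> 'a" where
  "traj f pol k y w 0 = y"
| "traj f pol k y w (Suc j) =
     f (k + j) (traj f pol k y w j) (pol (k + j) (traj f pol k y w j)) + w (k + j)"

text \<open>P^pi_k( x_t in T_t for all t in k+1..N | x_k = y ): the disturbances w_k..w_(N-1)
  are i.i.d. with law Pw (product measure), the event is measured in the completion.\<close>
definition reach_prob ::
  "(nat \<Rightarrow> 'a::{plus,topological_space} \<Rightarrow> 'b \<Rightarrow> 'a) \<Rightarrow> (nat \<Rightarrow> 'a \<Rightarrow> 'b) \<Rightarrow> nat \<Rightarrow> (nat \<Rightarrow> 'a set)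
    \<Rightarrow> 'a measure \<Rightarrow> nat \<Rightarrow> 'a \<Rightarrow> real" where
  "reach_prob f pol N T Pw k y =
     measure (completion (PiM {k..<N} (\<lambda>_. Pw)))
       {\<omega> \<in> space (PiM {k..<N} (\<lambda>_. Pw)). \<forall>j\<in>{1..N-k}. traj f pol k y \<omega> j \<in> T (k + j)}"

definition stoch_reach_set ::
  "(nat \<Rightarrow> 'a::{plus,topological_space} \<Rightarrow> 'b::topological_space \<Rightarrow> 'a) \<Rightarrow> 'a set \<Rightarrow> 'b set \<Rightarrow> nat
    \<Rightarrow> (nat \<Rightarrow> 'a set) \<Rightarrow> 'a measure \<Rightarrow> nat \<Rightarrow> real \<Rightarrow> 'a set" where
  "stoch_reach_set f X U N T Pw k \<alpha> =
     {y \<in> T k. (SUP pol\<in>markov_policies N X U. reach_prob f pol N T Pw k y) \<ge> \<alpha>}"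

text \<open>Disturbance minimal reach set R_k(T, E) (no measurability on the feedback laws).\<close>
definition min_reach_set ::
  "(nat \<Rightarrow> 'a::plus \<Rightarrow> 'b \<Rightarrow> 'a) \<Rightarrow> 'a set \<Rightarrow> 'b set \<Rightarrow> nat \<Rightarrow> (nat \<Rightarrow> 'a set) \<Rightarrow> 'a set
    \<Rightarrow> nat \<Rightarrow> 'a set" where
  "min_reach_set f X U N T E k =
     (if k = N then T N else
      {x \<in> T k. \<exists>\<nu>. (\<forall>t\<in>{k..<N}. \<forall>z\<in>X. \<nu> t z \<in> U) \<and>
         (\<forall>w. (\<forall>t\<in>{k..<N}. w t \<in> E) \<longrightarrow> (\<forall>j\<in>{1..N-k}. traj f \<nu> k x w j \<in> T (k + j)))})"

end

theory Submission
  imports Defs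
begin

text \<open>Let \<open>R N = T N\<close> and let \<open>R t\<close> be the set of \<open>x \<in> T t\<close> admitting an input \<open>u \<in> U\<close> with
  \<open>f t x u + e \<in> R (t + 1)\<close> for all \<open>e \<in> E\<close>. Every state of the disturbance minimal reach set lies
  in \<open>R k\<close>. Continuity of \<open>f t\<close> and compactness of \<open>U\<close> make each \<open>R t\<close> closed, and a measurable
  selection (a limit of dyadic approximations along a dense sequence) realises the robust step by
  a Borel, hence Markov, policy. Under this policy every disturbance sequence in \<open>E\<close> keeps the
  trajectory in the tube, so the reach probability is at least \<open>P\<^sub>w(E) ^ (N - k) = \<alpha>\<close>.\<close>

section \<open>Measurable selection\<close>

lemma closed_fst_image:
  fixes G :: "('a::euclidean_space \<times> 'b::euclidean_space) set"
  assumes "closed G" "compact U" "G \<subseteq> UNIV \<times> U"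
  shows "closed (fst ` G)"
proof -
  have "closed ((\<lambda>p. (snd p, fst p)) -` G)"
    by (intro continuous_closed_vimage assms(1)) (auto intro!: continuous_intros)
  then have "closed {x. \<exists>u. u \<in> U \<and> (u, x) \<in> (\<lambda>p. (snd p, fst p)) -` G}"
    by (rule closed_compact_projection[OF assms(2)])
  moreover have "{x. \<exists>u. u \<in> U \<and> (u, x) \<in> (\<lambda>p. (snd p, fst p)) -` G} = fst ` G"
    using assms(3) by force
  ultimately show ?thesis by simp
qed

definition near_section :: "('a \<times> 'b::metric_space) set \<Rightarrow> real \<Rightarrow> 'b \<Rightarrow> 'a set" where
  "near_section G r c = {x. \<exists>u. (x, u) \<in> G \<and> dist c u \<le> r}"

lemma closed_near_section:
  fixes G :: "('a::euclidean_space \<times> 'b::euclidean_space) set"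
  assumes "closed G" "compact U" "G \<subseteq> UNIV \<times> U"
  shows "closed (near_section G r c)"
proof -
  have "closed (G \<inter> {p. dist c (snd p) \<le> r})"
    by (intro closed_Int assms(1) closed_Collect_le) (auto intro!: continuous_intros)
  then have "closed (fst ` (G \<inter> {p. dist c (snd p) \<le> r}))"
    by (rule closed_fst_image[OF _ assms(2)]) (use assms(3) in auto)
  moreover have "fst ` (G \<inter> {p. dist c (snd p) \<le> r}) = near_section G r c"
    unfolding near_section_def by force
  ultimately show ?thesis by simp
qed

text \<open>Taking the least admissible index keeps every approximation Borel; the distance constraint
  makes the approximations a Cauchy sequence.\<close>
primrec dyadic_selector :: "(nat \<Rightarrow> 'b::metric_space) \<Rightarrow> ('a \<times> 'b) set \<Rightarrow> nat \<Rightarrow> 'a \<Rightarrow> 'b" where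
  "dyadic_selector d G 0 x = d (LEAST n. x \<in> near_section G 1 (d n))"
| "dyadic_selector d G (Suc j) x =
     d (LEAST n. x \<in> near_section G ((1/2) ^ Suc j) (d n) \<and>
                 dist (d n) (dyadic_selector d G j x) < 2 * (1/2) ^ j)"

declare dyadic_selector.simps [simp del]

lemma dyadic_selector_measurable:
  fixes G :: "('a::euclidean_space \<times> 'b::euclidean_space) set"
  assumes "closed G" "compact U" "G \<subseteq> UNIV \<times> U"
  shows "dyadic_selector d G j \<in> borel_measurable borel"
proof -
  have [measurable]: "Measurable.pred borel (\<lambda>x. x \<in> near_section G r c)" for r c
    using closed_near_section[OF assms] by (simp add: pred_def)
  have [measurable]: "d \<in> count_space UNIV \<rightarrow>\<^sub>M borel"
    by simp
  show ?thesis
  proof (induction j)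
    case (Suc j)
    note [measurable] = Suc
    show ?case by (simp add: dyadic_selector.simps)
  qed (simp add: dyadic_selector.simps)
qed

lemma near_section_refine:
  assumes dense: "\<And>u e. e > 0 \<Longrightarrow> \<exists>n. dist (d n) u < e"
    and "x \<in> near_section G ((1/2) ^ j) c"
  shows "\<exists>n. x \<in> near_section G ((1/2) ^ Suc j) (d n) \<and> dist (d n) c < 2 * (1/2) ^ j"
proof -
  obtain u where u: "(x, u) \<in> G" "dist c u \<le> (1/2) ^ j"
    using assms(2) unfolding near_section_def by auto
  obtain n where n: "dist (d n) u < (1/2) ^ Suc j"
    using dense[of "(1/2) ^ Suc j" u] by auto
  have "dist (d n) c \<le> dist (d n) u + dist c u"
    by (rule dist_triangle2)
  also have "\<dots> < (1/2) ^ Suc j + (1/2) ^ j"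
    using n u by simp
  also have "\<dots> \<le> 2 * (1/2) ^ j"
    by simp
  finally show ?thesis
    using u n unfolding near_section_def by force
qed

lemma dyadic_selector_near:
  assumes dense: "\<And>u e. e > 0 \<Longrightarrow> \<exists>n. dist (d n) u < e" and "x \<in> fst ` G"
  shows "x \<in> near_section G ((1/2) ^ j) (dyadic_selector d G j x)"
proof (induction j)
  case 0
  obtain u where u: "(x, u) \<in> G"
    using assms(2) by force
  obtain n where "dist (d n) u < 1"
    using dense[of 1 u] by auto
  with u have "\<exists>n. x \<in> near_section G 1 (d n)"
    unfolding near_section_def by (auto simp: dist_commute intro!: less_imp_le)
  from LeastI_ex[OF this] show ?case
    by (simp add: dyadic_selector.simps)
next
  case (Suc j)
  from LeastI_ex[OF near_section_refine[OF dense Suc]] show ?case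
    by (simp only: dyadic_selector.simps)
qed

lemma dyadic_selector_dist_Suc:
  assumes dense: "\<And>u e. e > 0 \<Longrightarrow> \<exists>n. dist (d n) u < e" and "x \<in> fst ` G"
  shows "dist (dyadic_selector d G (Suc j) x) (dyadic_selector d G j x) < 2 * (1/2) ^ j"
  using LeastI_ex[OF near_section_refine[OF dense dyadic_selector_near[OF assms]]]
  by (simp only: dyadic_selector.simps)

lemma convergent_if_summable_norm_diff:
  fixes a :: "nat \<Rightarrow> 'a::banach"
  assumes "summable (\<lambda>j. norm (a (Suc j) - a j))"
  shows "convergent a"
proof -
  have "summable (\<lambda>j. a (Suc j) - a j)"
    using assms by (rule summable_norm_cancel)
  then have "convergent (\<lambda>n. (\<Sum>j<n. a (Suc j) - a j) + a 0)"
    by (intro convergent_add convergent_const) (simp add: summable_iff_convergent)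
  then show ?thesis
    by (simp add: sum_lessThan_telescope)
qed

lemma measurable_selection:
  fixes G :: "('a::euclidean_space \<times> 'b::euclidean_space) set"
  assumes G: "closed G" "compact U" "G \<subseteq> UNIV \<times> U"
  obtains g where "g \<in> borel_measurable borel" "\<And>x. x \<in> fst ` G \<Longrightarrow> (x, g x) \<in> G"
proof -
  obtain D :: "'b set" where D: "countable D" "\<And>Y. open Y \<Longrightarrow> Y \<noteq> {} \<Longrightarrow> \<exists>c\<in>D. c \<in> Y"
    by (erule countable_dense_setE)
  define d where "d = from_nat_into D"
  have dense: "\<exists>n. dist (d n) u < e" if e: "e > 0" for u e
  proof -
    have "\<exists>c\<in>D. c \<in> ball u e"
      using D(2)[of "ball u e"] e by simp
    then obtain c where c: "c \<in> D" "dist u c < e"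
      by auto
    then have "d (to_nat_on D c) = c"
      unfolding d_def using D(1) by (simp add: from_nat_into_to_nat_on)
    then show ?thesis
      using c(2) by (metis dist_commute)
  qed
  let ?s = "\<lambda>j x. dyadic_selector d G j x"
  define g where "g x = lim (\<lambda>j. ?s j x)" for x
  have "(x, g x) \<in> G" if x: "x \<in> fst ` G" for x
  proof -
    have "summable (\<lambda>j. 2 * (1/2::real) ^ j)"
      by (intro summable_mult summable_geometric) simp
    moreover have "norm (norm (?s (Suc j) x - ?s j x)) \<le> 2 * (1/2) ^ j" for j
      using dyadic_selector_dist_Suc[OF dense x, of j] by (simp add: dist_norm)
    ultimately have "summable (\<lambda>j. norm (?s (Suc j) x - ?s j x))"
      by (rule summable_comparison_test'[where N = 0])
    then have "convergent (\<lambda>j. ?s j x)"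
      by (rule convergent_if_summable_norm_diff)
    then have lim: "(\<lambda>j. ?s j x) \<longlonglongrightarrow> g x"
      unfolding g_def by (rule convergent_LIMSEQ_iff[THEN iffD1])
    have "\<forall>j. \<exists>u. (x, u) \<in> G \<and> dist (?s j x) u \<le> (1/2) ^ j"
      using dyadic_selector_near[OF dense x] by (simp add: near_section_def)
    then obtain u where u: "\<And>j. (x, u j) \<in> G" "\<And>j. dist (?s j x) (u j) \<le> (1/2) ^ j"
      by metis
    have "(\<lambda>j. u j - ?s j x) \<longlonglongrightarrow> 0"
      by (rule Lim_null_comparison[where g = "\<lambda>j. (1/2) ^ j"])
         (use u(2) in \<open>auto simp: dist_norm norm_minus_commute intro!: LIMSEQ_realpow_zero\<close>)
    then have "u \<longlonglongrightarrow> g x"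
      using Lim_transform[OF lim] by blast
    then show ?thesis
      using closed_sequentially[OF G(1), of "\<lambda>j. (x, u j)"] u(1) by (simp add: tendsto_Pair)
  qed
  moreover have "g \<in> borel_measurable borel"
    unfolding g_def by (intro borel_measurable_lim_metric dyadic_selector_measurable[OF G])
  ultimately show ?thesis
    using that by blast
qed

section \<open>Robust backward reachable sets\<close>

definition robust_pre :: "('a::plus \<Rightarrow> 'b \<Rightarrow> 'a) \<Rightarrow> 'b set \<Rightarrow> 'a set \<Rightarrow> 'a set \<Rightarrow> 'a set \<Rightarrow> 'a set" where
  "robust_pre h U E S R = {x \<in> S. \<exists>u\<in>U. \<forall>e\<in>E. h x u + e \<in> R}"

lemma closed_robust_pre_graph:
  fixes h :: "'a::real_normed_vector \<Rightarrow> 'b::t2_space \<Rightarrow> 'a"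
  assumes "closed S" "compact U" "closed R" "continuous_on (S \<times> U) (\<lambda>(x, u). h x u)"
  shows "closed {(x, u) \<in> S \<times> U. \<forall>e\<in>E. h x u + e \<in> R}"
proof -
  have "closed (\<Inter>e\<in>E. (\<lambda>z. z + e) -` R)"
    by (intro closed_INT ballI continuous_closed_vimage assms(3)) (auto intro!: continuous_intros)
  then have "closed ((S \<times> U) \<inter> (\<lambda>(x, u). h x u) -` (\<Inter>e\<in>E. (\<lambda>z. z + e) -` R))"
    by (rule continuous_closed_preimage[OF assms(4) closed_Times[OF assms(1) compact_imp_closed[OF assms(2)]]])
  moreover have "(S \<times> U) \<inter> (\<lambda>(x, u). h x u) -` (\<Inter>e\<in>E. (\<lambda>z. z + e) -` R) =
      {(x, u) \<in> S \<times> U. \<forall>e\<in>E. h x u + e \<in> R}"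
    by auto
  ultimately show ?thesis
    by simp
qed

lemma robust_pre_eq_fst_graph:
  "robust_pre h U E S R = fst ` {(x, u) \<in> S \<times> U. \<forall>e\<in>E. h x u + e \<in> R}"
  unfolding robust_pre_def by force

lemma closed_robust_pre:
  fixes h :: "'a::euclidean_space \<Rightarrow> 'b::euclidean_space \<Rightarrow> 'a"
  assumes "closed S" "compact U" "closed R" "continuous_on (S \<times> U) (\<lambda>(x, u). h x u)"
  shows "closed (robust_pre h U E S R)"
  unfolding robust_pre_eq_fst_graph
  by (rule closed_fst_image[OF closed_robust_pre_graph[OF assms] assms(2)]) auto

lemma robust_pre_selection:
  fixes h :: "'a::euclidean_space \<Rightarrow> 'b::euclidean_space \<Rightarrow> 'a"
  assumes "closed S" "compact U" "closed R" "continuous_on (S \<times> U) (\<lambda>(x, u). h x u)"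
    and "U \<noteq> {}"
  obtains g where "g \<in> borel_measurable borel" "\<And>x. g x \<in> U"
    "\<And>x e. x \<in> robust_pre h U E S R \<Longrightarrow> e \<in> E \<Longrightarrow> h x (g x) + e \<in> R"
proof -
  let ?G = "{(x, u) \<in> S \<times> U. \<forall>e\<in>E. h x u + e \<in> R}"
  have "?G \<subseteq> UNIV \<times> U"
    by auto
  then obtain g where g: "g \<in> borel_measurable borel" "\<And>x. x \<in> fst ` ?G \<Longrightarrow> (x, g x) \<in> ?G"
    using measurable_selection[OF closed_robust_pre_graph[OF assms(1-4)] assms(2)] by blast
  have sel: "g x \<in> U \<and> (\<forall>e\<in>E. h x (g x) + e \<in> R)" if "x \<in> robust_pre h U E S R" for x
    using g(2)[of x] that unfolding robust_pre_eq_fst_graph by simp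
  obtain u0 where "u0 \<in> U"
    using assms(5) by blast
  define g' where "g' x = (if x \<in> robust_pre h U E S R then g x else u0)" for x
  have "robust_pre h U E S R \<in> sets borel"
    by (intro borel_closed closed_robust_pre[OF assms(1-4)])
  then have "g' \<in> borel_measurable borel"
    unfolding g'_def by (intro measurable_If_set[OF g(1) measurable_const]) simp_all
  moreover have "g' x \<in> U" for x
    using sel \<open>u0 \<in> U\<close> unfolding g'_def by simp
  moreover have "h x (g' x) + e \<in> R" if "x \<in> robust_pre h U E S R" "e \<in> E" for x e
    using sel that unfolding g'_def by simp
  ultimately show ?thesis
    using that by blast
qed

function robust_reach ::
  "(nat \<Rightarrow> 'a::plus \<Rightarrow> 'b \<Rightarrow> 'a) \<Rightarrow> 'b set \<Rightarrow> nat \<Rightarrow> (nat \<Rightarrow> 'a set) \<Rightarrow> 'a set \<Rightarrow> nat \<Rightarrow> 'a set"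
where
  "robust_reach f U N T E t =
     (if N \<le> t then T N else robust_pre (f t) U E (T t) (robust_reach f U N T E (Suc t)))"
  by auto
termination
  by (relation "Wellfounded.measure (\<lambda>(f, U, N, T, E, t). N - t)") auto

declare robust_reach.simps [simp del]

lemma robust_reach_final [simp]: "robust_reach f U N T E N = T N"
  by (simp add: robust_reach.simps)

lemma robust_reach_step:
  "t < N \<Longrightarrow> robust_reach f U N T E t = robust_pre (f t) U E (T t) (robust_reach f U N T E (Suc t))"
  by (simp add: robust_reach.simps)

lemma robust_reach_subset: "t \<le> N \<Longrightarrow> robust_reach f U N T E t \<subseteq> T t"
  by (cases "t < N") (auto simp: robust_reach_step robust_pre_def)

lemma closed_robust_reach:
  fixes f :: "nat \<Rightarrow> 'a::euclidean_space \<Rightarrow> 'b::euclidean_space \<Rightarrow> 'a"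
  assumes "\<And>t. t < N \<Longrightarrow> continuous_on (T t \<times> U) (\<lambda>(x, u). f t x u)"
    and "\<And>t. t \<le> N \<Longrightarrow> closed (T t)" and "compact U"
  shows "closed (robust_reach f U N T E t)"
proof (induction "N - t" arbitrary: t)
  case 0
  then show ?case
    using assms(2) by (simp add: robust_reach.simps)
next
  case (Suc m)
  then show ?case
    by (simp add: robust_reach_step closed_robust_pre assms)
qed

lemma robust_policy:
  fixes f :: "nat \<Rightarrow> 'a::euclidean_space \<Rightarrow> 'b::euclidean_space \<Rightarrow> 'a"
  assumes "\<And>t. t < N \<Longrightarrow> continuous_on (T t \<times> U) (\<lambda>(x, u). f t x u)"
    and "\<And>t. t \<le> N \<Longrightarrow> closed (T t)" and "compact U" and "U \<noteq> {}"
  obtains pol where "\<And>t. pol t \<in> borel_measurable borel" "\<And>t x. pol t x \<in> U"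
    "\<And>t x e. t < N \<Longrightarrow> x \<in> robust_reach f U N T E t \<Longrightarrow> e \<in> E \<Longrightarrow>
       f t x (pol t x) + e \<in> robust_reach f U N T E (Suc t)"
proof -
  have "\<exists>g. g \<in> borel_measurable borel \<and> (\<forall>x. g x \<in> U) \<and>
      (t < N \<longrightarrow> (\<forall>x\<in>robust_reach f U N T E t. \<forall>e\<in>E. f t x (g x) + e \<in> robust_reach f U N T E (Suc t)))"
    for t
  proof (cases "t < N")
    case True
    have Tt: "closed (T t)" "continuous_on (T t \<times> U) (\<lambda>(x, u). f t x u)"
        "closed (robust_reach f U N T E (Suc t))"
      using True assms by (simp_all add: closed_robust_reach)
    obtain g where "g \<in> borel_measurable borel" "\<And>x. g x \<in> U"
      "\<And>x e. x \<in> robust_pre (f t) U E (T t) (robust_reach f U N T E (Suc t)) \<Longrightarrow> e \<in> E \<Longrightarrow>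
         f t x (g x) + e \<in> robust_reach f U N T E (Suc t)"
      using robust_pre_selection[OF Tt(1) assms(3) Tt(3) Tt(2) assms(4)] by blast
    then show ?thesis
      using True by (auto simp: robust_reach_step)
  next
    case False
    obtain u0 where "u0 \<in> U"
      using assms(4) by blast
    then show ?thesis
      using False by (intro exI[of _ "\<lambda>_. u0"]) auto
  qed
  then show ?thesis
    using that by metis
qed

definition robustly_safe ::
  "(nat \<Rightarrow> 'a::plus \<Rightarrow> 'b \<Rightarrow> 'a) \<Rightarrow> (nat \<Rightarrow> 'a \<Rightarrow> 'b) \<Rightarrow> 'a set \<Rightarrow> nat \<Rightarrow> (nat \<Rightarrow> 'a set) \<Rightarrow> nat \<Rightarrow> 'a \<Rightarrow> bool"
where
  "robustly_safe f \<nu> E N T t x \<longleftrightarrow>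
     (\<forall>w. (\<forall>s\<in>{t..<N}. w s \<in> E) \<longrightarrow> (\<forall>j\<in>{1..N-t}. traj f \<nu> t x w j \<in> T (t + j)))"

lemma traj_Suc_shift:
  "traj f \<nu> t x w (Suc j) = traj f \<nu> (Suc t) (f t x (\<nu> t x) + w t) w j"
  by (induction j) simp_all

lemma traj_cong:
  "(\<And>s. k \<le> s \<Longrightarrow> w s = w' s) \<Longrightarrow> traj f \<nu> k y w j = traj f \<nu> k y w' j"
  by (induction j) simp_all

lemma robustly_safe_successor:
  assumes "robustly_safe f \<nu> E N T t x" "t < N" "e \<in> E"
  shows "f t x (\<nu> t x) + e \<in> T (Suc t)" "robustly_safe f \<nu> E N T (Suc t) (f t x (\<nu> t x) + e)"
proof -
  show "f t x (\<nu> t x) + e \<in> T (Suc t)"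
    using assms(1)[unfolded robustly_safe_def, rule_format, of "\<lambda>_. e" 1] assms(2,3) by simp
  show "robustly_safe f \<nu> E N T (Suc t) (f t x (\<nu> t x) + e)"
    unfolding robustly_safe_def
  proof (intro allI impI ballI)
    fix w j
    assume w: "\<forall>s\<in>{Suc t..<N}. w s \<in> E" and j: "j \<in> {1..N - Suc t}"
    have "\<forall>s\<in>{t..<N}. (w(t := e)) s \<in> E"
      using w assms(3) by (auto simp: Suc_le_eq)
    moreover have "Suc j \<in> {1..N - t}"
      using j by auto
    ultimately have "traj f \<nu> t x (w(t := e)) (Suc j) \<in> T (t + Suc j)"
      using assms(1) unfolding robustly_safe_def by blast
    moreover have "traj f \<nu> t x (w(t := e)) (Suc j) = traj f \<nu> (Suc t) (f t x (\<nu> t x) + e) w j"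
      unfolding traj_Suc_shift by (auto intro: traj_cong)
    ultimately show "traj f \<nu> (Suc t) (f t x (\<nu> t x) + e) w j \<in> T (Suc t + j)"
      by simp
  qed
qed

lemma robust_reach_if_robustly_safe:
  assumes "\<And>s z. t \<le> s \<Longrightarrow> s < N \<Longrightarrow> z \<in> T s \<Longrightarrow> \<nu> s z \<in> U"
    and "t \<le> N" "x \<in> T t" "robustly_safe f \<nu> E N T t x"
  shows "x \<in> robust_reach f U N T E t"
  using assms
proof (induction "N - t" arbitrary: t x)
  case 0
  then show ?case
    by simp
next
  case (Suc m)
  have "f t x (\<nu> t x) + e \<in> robust_reach f U N T E (Suc t)" if "e \<in> E" for e
    using Suc robustly_safe_successor[OF Suc.prems(4) _ that] by (intro Suc.hyps) auto
  moreover have "\<nu> t x \<in> U"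
    using Suc.hyps(2) Suc.prems(1,3) by simp
  ultimately show ?case
    using Suc.hyps(2) Suc.prems(3) by (auto simp: robust_reach_step robust_pre_def)
qed

lemma min_reach_set_subset_robust_reach:
  assumes "\<forall>t\<le>N. T t \<subseteq> X" "k < N"
  shows "min_reach_set f X U N T E k \<subseteq> robust_reach f U N T E k"
proof
  fix x
  assume "x \<in> min_reach_set f X U N T E k"
  then obtain \<nu> where \<nu>: "x \<in> T k" "\<forall>t\<in>{k..<N}. \<forall>z\<in>X. \<nu> t z \<in> U" "robustly_safe f \<nu> E N T k x"
    using assms(2) unfolding min_reach_set_def robustly_safe_def by auto
  have "\<nu> s z \<in> U" if "k \<le> s" "s < N" "z \<in> T s" for s z
    using \<nu>(2) assms(1) that by (meson atLeastLessThan_iff less_imp_le subsetD)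
  then show "x \<in> robust_reach f U N T E k"
    using \<nu>(1,3) assms(2) by (intro robust_reach_if_robustly_safe[where \<nu> = \<nu>]) auto
qed

lemma traj_in_invariant_tube:
  assumes "\<And>t x e. k \<le> t \<Longrightarrow> t < N \<Longrightarrow> x \<in> R t \<Longrightarrow> e \<in> E \<Longrightarrow> f t x (pol t x) + e \<in> R (Suc t)"
    and "y \<in> R k" "\<forall>s\<in>{k..<N}. w s \<in> E"
  shows "j \<le> N - k \<Longrightarrow> traj f pol k y w j \<in> R (k + j)"
proof (induction j)
  case (Suc j)
  then show ?case
    using assms by simp
qed (use assms in simp)

section \<open>Probability of staying in the target tube\<close>

lemma traj_eq_if_agree_on_tube:
  assumes "\<And>t x u. x \<in> T t \<Longrightarrow> u \<in> U \<Longrightarrow> g t x u = f t x u" and "\<And>t x. pol t x \<in> U"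
  shows "(\<forall>i<j. traj f pol k y w i \<in> T (k + i)) \<Longrightarrow> traj g pol k y w j = traj f pol k y w j"
  by (induction j) (simp_all add: assms)

lemma safe_traj_iff_if_agree_on_tube:
  assumes "\<And>t x u. x \<in> T t \<Longrightarrow> u \<in> U \<Longrightarrow> g t x u = f t x u" and "\<And>t x. pol t x \<in> U"
    and "y \<in> T k"
  shows "(\<forall>j\<in>{1..n}. traj g pol k y w j \<in> T (k + j)) \<longleftrightarrow> (\<forall>j\<in>{1..n}. traj f pol k y w j \<in> T (k + j))"
proof -
  have "\<forall>j\<in>{1..n}. traj g' pol k y w j \<in> T (k + j)"
    if agree: "\<And>t x u. x \<in> T t \<Longrightarrow> u \<in> U \<Longrightarrow> g' t x u = f' t x u"
      and safe: "\<forall>j\<in>{1..n}. traj f' pol k y w j \<in> T (k + j)" for f' g'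
  proof
    fix j
    assume j: "j \<in> {1..n}"
    have "traj f' pol k y w i \<in> T (k + i)" if "i < j" for i
      using safe j that assms(3) by (cases "i = 0") auto
    then show "traj g' pol k y w j \<in> T (k + j)"
      using traj_eq_if_agree_on_tube[OF agree assms(2)] safe j by simp
  qed
  then show ?thesis
    using assms(1) by (metis (no_types, lifting))
qed

lemma traj_measurable:
  fixes g :: "nat \<Rightarrow> 'a::euclidean_space \<Rightarrow> 'b::euclidean_space \<Rightarrow> 'a"
  assumes "\<And>t. t \<in> {k..<N} \<Longrightarrow> (\<lambda>(x, u). g t x u) \<in> borel_measurable borel"
    and "\<And>t. t \<in> {k..<N} \<Longrightarrow> pol t \<in> borel_measurable borel"
    and "sets Pw = sets borel"
  shows "j \<le> N - k \<Longrightarrow> (\<lambda>\<omega>. traj g pol k y \<omega> j) \<in> borel_measurable (PiM {k..<N} (\<lambda>_. Pw))"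
proof (induction j)
  case (Suc j)
  let ?P = "PiM {k..<N} (\<lambda>_. Pw)"
  have t: "k + j \<in> {k..<N}"
    using Suc.prems by auto
  have [measurable]: "(\<lambda>\<omega>. traj g pol k y \<omega> j) \<in> borel_measurable ?P"
    using Suc by simp
  have [measurable]: "pol (k + j) \<in> borel_measurable borel"
    using assms(2)[OF t] .
  have "(\<lambda>\<omega>. (traj g pol k y \<omega> j, pol (k + j) (traj g pol k y \<omega> j))) \<in> borel_measurable ?P"
    unfolding borel_prod[symmetric] by measurable
  from measurable_compose[OF this assms(1)[OF t]]
  have "(\<lambda>\<omega>. g (k + j) (traj g pol k y \<omega> j) (pol (k + j) (traj g pol k y \<omega> j))) \<in> borel_measurable ?P"
    by simp
  moreover have "(\<lambda>\<omega>. \<omega> (k + j)) \<in> borel_measurable ?P"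
    using measurable_component_singleton[OF t, of "\<lambda>_. Pw"] measurable_cong_sets[OF refl assms(3)]
    by blast
  ultimately show ?case
    by simp
qed simp

definition safe_event ::
  "(nat \<Rightarrow> 'a::plus \<Rightarrow> 'b \<Rightarrow> 'a) \<Rightarrow> (nat \<Rightarrow> 'a \<Rightarrow> 'b) \<Rightarrow> nat \<Rightarrow> (nat \<Rightarrow> 'a set)
    \<Rightarrow> 'a measure \<Rightarrow> nat \<Rightarrow> 'a \<Rightarrow> (nat \<Rightarrow> 'a) set" where
  "safe_event f pol N T Pw k y =
     {\<omega> \<in> space (PiM {k..<N} (\<lambda>_. Pw)). \<forall>j\<in>{1..N-k}. traj f pol k y \<omega> j \<in> T (k + j)}"

lemma reach_prob_eq_measure_safe_event:
  "reach_prob f pol N T Pw k y = measure (completion (PiM {k..<N} (\<lambda>_. Pw))) (safe_event f pol N T Pw k y)"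
  unfolding reach_prob_def safe_event_def ..

lemma safe_event_measurable:
  fixes f :: "nat \<Rightarrow> 'a::euclidean_space \<Rightarrow> 'b::euclidean_space \<Rightarrow> 'a"
  assumes "\<And>t. t < N \<Longrightarrow> continuous_on (T t \<times> U) (\<lambda>(x, u). f t x u)"
    and "\<And>t. t \<le> N \<Longrightarrow> closed (T t)" and "closed U"
    and "\<And>t. pol t \<in> borel_measurable borel" and "\<And>t x. pol t x \<in> U"
    and "sets Pw = sets borel" and "y \<in> T k"
  shows "safe_event f pol N T Pw k y \<in> sets (PiM {k..<N} (\<lambda>_. Pw))"
proof -
  \<comment> \<open>\<open>f t\<close> need not be Borel off \<open>T t \<times> U\<close>, but along safe trajectories it can be
    replaced by its extension by zero\<close>
  define g where "g t x u = (if (x, u) \<in> T t \<times> U then f t x u else 0)" for t x u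
  have "(\<lambda>(x, u). g t x u) \<in> borel_measurable borel" if "t \<in> {k..<N}" for t
  proof -
    have "(\<lambda>p. if p \<in> T t \<times> U then (\<lambda>(x, u). f t x u) p else 0) \<in> borel_measurable borel"
      using that assms(1-3)
      by (intro borel_measurable_continuous_on_if borel_closed closed_Times continuous_on_const) auto
    moreover have "(\<lambda>(x, u). g t x u) = (\<lambda>p. if p \<in> T t \<times> U then (\<lambda>(x, u). f t x u) p else 0)"
      unfolding g_def by auto
    ultimately show ?thesis
      by simp
  qed
  then have safe_j: "Measurable.pred (PiM {k..<N} (\<lambda>_. Pw)) (\<lambda>\<omega>. traj g pol k y \<omega> j \<in> T (k + j))"
    if "j \<in> {1..N-k}" for j
  proof -
    have [measurable]: "(\<lambda>\<omega>. traj g pol k y \<omega> j) \<in> borel_measurable (PiM {k..<N} (\<lambda>_. Pw))"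
      using traj_measurable[of k N g pol Pw] \<open>\<And>t. t \<in> {k..<N} \<Longrightarrow> _\<close> assms(4,6) that by auto
    have [measurable]: "T (k + j) \<in> sets borel"
      using assms(2) that by (intro borel_closed) auto
    show ?thesis
      by measurable
  qed
  have "Measurable.pred (PiM {k..<N} (\<lambda>_. Pw)) (\<lambda>\<omega>. \<forall>j\<in>{1..N-k}. traj g pol k y \<omega> j \<in> T (k + j))"
    by (rule pred_intros_finite(3)[OF finite_atLeastAtMost safe_j])
  moreover have "(\<forall>j\<in>{1..N-k}. traj g pol k y \<omega> j \<in> T (k + j)) \<longleftrightarrow>
      (\<forall>j\<in>{1..N-k}. traj f pol k y \<omega> j \<in> T (k + j))" for \<omega>
    by (rule safe_traj_iff_if_agree_on_tube[where U = U]) (simp_all add: g_def assms(5,7))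
  ultimately show ?thesis
    unfolding safe_event_def pred_def by simp
qed

lemma PiE_subset_safe_event:
  assumes "\<And>t x e. k \<le> t \<Longrightarrow> t < N \<Longrightarrow> x \<in> R t \<Longrightarrow> e \<in> E \<Longrightarrow> f t x (pol t x) + e \<in> R (Suc t)"
    and "\<And>t. k < t \<Longrightarrow> t \<le> N \<Longrightarrow> R t \<subseteq> T t" and "y \<in> R k"
    and "space Pw = UNIV"
  shows "PiE {k..<N} (\<lambda>_. E) \<subseteq> safe_event f pol N T Pw k y"
proof
  fix \<omega>
  assume \<omega>: "\<omega> \<in> PiE {k..<N} (\<lambda>_. E)"
  then have "\<forall>s\<in>{k..<N}. \<omega> s \<in> E"
    by (auto simp: PiE_iff)
  then have "traj f pol k y \<omega> j \<in> R (k + j)" if "j \<in> {1..N-k}" for j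
    using traj_in_invariant_tube[where R = R and f = f and pol = pol and E = E and k = k and N = N,
          OF assms(1,3), of \<omega> j] that by auto
  moreover have "R (k + j) \<subseteq> T (k + j)" if "j \<in> {1..N-k}" for j
    using that by (intro assms(2)) auto
  ultimately have "traj f pol k y \<omega> j \<in> T (k + j)" if "j \<in> {1..N-k}" for j
    using that by blast
  moreover have "\<omega> \<in> space (PiM {k..<N} (\<lambda>_. Pw))"
    using \<omega> assms(4) by (auto simp: space_PiM PiE_def)
  ultimately show "\<omega> \<in> safe_event f pol N T Pw k y"
    unfolding safe_event_def by blast
qed

lemma measure_PiM_PiE_const:
  assumes "prob_space M" "finite I" "A \<in> sets M"
  shows "measure (PiM I (\<lambda>_. M)) (PiE I (\<lambda>_. A)) = measure M A ^ card I"
proof -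
  interpret M: prob_space M
    by (rule assms(1))
  interpret product_sigma_finite "\<lambda>_. M"
    by (simp add: product_sigma_finite_def M.sigma_finite_measure_axioms)
  have "emeasure (PiM I (\<lambda>_. M)) (PiE I (\<lambda>_. A)) = (\<Prod>i\<in>I. emeasure M A)"
    using assms(2,3) by (rule emeasure_PiM)
  also have "\<dots> = ennreal (measure M A ^ card I)"
    by (simp add: M.emeasure_eq_measure prod_ennreal ennreal_power)
  finally show ?thesis
    by (simp add: measure_def)
qed

lemma reach_prob_ge_measure_box:
  assumes "prob_space Pw" "E \<in> sets Pw"
    and "safe_event f pol N T Pw k y \<in> sets (PiM {k..<N} (\<lambda>_. Pw))"
    and "PiE {k..<N} (\<lambda>_. E) \<subseteq> safe_event f pol N T Pw k y"
  shows "measure Pw E ^ (N - k) \<le> reach_prob f pol N T Pw k y"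
proof -
  interpret P: prob_space "PiM {k..<N} (\<lambda>_. Pw)"
    using assms(1) by (intro prob_space_PiM)
  have "measure Pw E ^ (N - k) = measure (PiM {k..<N} (\<lambda>_. Pw)) (PiE {k..<N} (\<lambda>_. E))"
    using measure_PiM_PiE_const[OF assms(1) _ assms(2), of "{k..<N}"] by simp
  also have "\<dots> \<le> measure (PiM {k..<N} (\<lambda>_. Pw)) (safe_event f pol N T Pw k y)"
    using assms(3,4) by (intro P.finite_measure_mono)
  also have "\<dots> = reach_prob f pol N T Pw k y"
    using assms(3) by (simp add: reach_prob_eq_measure_safe_event)
  finally show ?thesis .
qed

lemma reach_prob_ge_of_robust_policy:
  fixes f :: "nat \<Rightarrow> 'a::euclidean_space \<Rightarrow> 'b::euclidean_space \<Rightarrow> 'a"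
  assumes "\<And>t. t < N \<Longrightarrow> continuous_on (T t \<times> U) (\<lambda>(x, u). f t x u)"
    and "\<And>t. t \<le> N \<Longrightarrow> closed (T t)" and "compact U"
    and "prob_space Pw" "sets Pw = sets borel" "E \<in> sets borel"
    and "\<And>t. pol t \<in> borel_measurable borel" "\<And>t x. pol t x \<in> U"
    and "\<And>t x e. t < N \<Longrightarrow> x \<in> robust_reach f U N T E t \<Longrightarrow> e \<in> E \<Longrightarrow>
       f t x (pol t x) + e \<in> robust_reach f U N T E (Suc t)"
    and "k \<le> N" "y \<in> robust_reach f U N T E k"
  shows "measure Pw E ^ (N - k) \<le> reach_prob f pol N T Pw k y"
proof (rule reach_prob_ge_measure_box)
  show "safe_event f pol N T Pw k y \<in> sets (PiM {k..<N} (\<lambda>_. Pw))"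
    using assms(1-5,7,8) robust_reach_subset[OF assms(10), where f = f and U = U and T = T and E = E] assms(11)
    by (intro safe_event_measurable) (auto intro: compact_imp_closed)
  show "PiE {k..<N} (\<lambda>_. E) \<subseteq> safe_event f pol N T Pw k y"
    using assms(9,11) robust_reach_subset[of _ N f U T E] sets_eq_imp_space_eq[OF assms(5)]
    by (intro PiE_subset_safe_event[where R = "robust_reach f U N T E"]) auto
qed (use assms(4-6) in auto)

lemma univ_measurable_on_if_borel_measurable:
  "g \<in> borel_measurable borel \<Longrightarrow> univ_measurable_on X g"
  unfolding univ_measurable_on_def
  by (metis measurable_completion measurable_cong_sets measurable_restrict_space1)

lemma reach_prob_le_1:
  assumes "prob_space Pw"
  shows "reach_prob f pol N T Pw k y \<le> 1"
proof -
  interpret prob_space "PiM {k..<N} (\<lambda>_. Pw)"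
    using assms by (intro prob_space_PiM)
  show ?thesis
    unfolding reach_prob_def by (rule prob_space.prob_le_1[OF prob_space_completion])
qed

lemma stoch_reach_set_if_policy:
  assumes "prob_space Pw" "y \<in> T k" "pol \<in> markov_policies N X U"
    and "\<alpha> \<le> reach_prob f pol N T Pw k y"
  shows "y \<in> stoch_reach_set f X U N T Pw k \<alpha>"
proof -
  have "bdd_above ((\<lambda>pol. reach_prob f pol N T Pw k y) ` markov_policies N X U)"
    by (rule bdd_aboveI2) (rule reach_prob_le_1[OF assms(1)])
  then show ?thesis
    unfolding stoch_reach_set_def using assms(2-4) by (auto intro: cSUP_upper2)
qed

lemma powr_inverse_power:
  fixes a :: real
  assumes "0 \<le> a" "n > 0"
  shows "(a powr (1 / real n)) ^ n = a"
  using assms by (simp add: root_powr_inverse[symmetric])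

theorem theorem2:
  fixes f :: "nat \<Rightarrow> 'a::euclidean_space \<Rightarrow> 'b::euclidean_space \<Rightarrow> 'a"
    and X W E :: "'a set" and U :: "'b set" and T :: "nat \<Rightarrow> 'a set"
    and Pw :: "'a measure" and N k :: nat and \<alpha> :: real
  assumes "N > 0"
    and "\<forall>t<N. \<forall>x\<in>X. \<forall>u\<in>U. f t x u \<in> X"
    and "\<forall>t<N. continuous_on (X \<times> U) (\<lambda>(x, u). f t x u)"
    and "compact U"
    and "0 \<in> W"
    and "prob_space Pw" and "sets Pw = sets borel"
    and "absolutely_continuous lborel Pw"
    and "AE w in Pw. w \<in> W"
    and "\<forall>t\<le>N. T t \<subseteq> X" and "\<forall>t\<le>N. closed (T t)"
    and "0 \<le> \<alpha>" and "\<alpha> \<le> 1" and "k < N"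
    and "E \<subseteq> W" and "E \<in> sets borel"
    and "measure Pw E = \<alpha> powr (1 / real (N - k))"
  shows "min_reach_set f X U N T E k \<subseteq> stoch_reach_set f X U N T Pw k \<alpha>"
proof
  fix y
  assume "y \<in> min_reach_set f X U N T E k"
  then have y: "y \<in> robust_reach f U N T E k"
    using min_reach_set_subset_robust_reach assms(10,14) by blast
  then have "y \<in> T k" "U \<noteq> {}"
    using robust_reach_subset[of k N] assms(14) by (auto simp: robust_reach_step robust_pre_def)
  have cont: "continuous_on (T t \<times> U) (\<lambda>(x, u). f t x u)" if "t < N" for t
    using assms(3,10) that by (meson Sigma_mono continuous_on_subset less_imp_le order_refl)
  have Tc: "closed (T t)" if "t \<le> N" for t
    using assms(11) that by simp
  obtain pol where pol: "\<And>t. pol t \<in> borel_measurable borel" "\<And>t x. pol t x \<in> U"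
    "\<And>t x e. t < N \<Longrightarrow> x \<in> robust_reach f U N T E t \<Longrightarrow> e \<in> E \<Longrightarrow>
       f t x (pol t x) + e \<in> robust_reach f U N T E (Suc t)"
    using robust_policy[where f = f and N = N and T = T and U = U and E = E,
        OF cont Tc assms(4) \<open>U \<noteq> {}\<close>] by blast
  have "measure Pw E ^ (N - k) \<le> reach_prob f pol N T Pw k y"
    by (rule reach_prob_ge_of_robust_policy[OF cont Tc assms(4,6,7,16) pol less_imp_le[OF assms(14)] y])
  moreover have "measure Pw E ^ (N - k) = \<alpha>"
    using powr_inverse_power[of \<alpha> "N - k"] assms(12,14,17) by simp
  moreover have "pol \<in> markov_policies N X U"
    using pol(1,2) by (simp add: markov_policies_def univ_measurable_on_if_borel_measurable)
  ultimately show "y \<in> stoch_reach_set f X U N T Pw k \<alpha>"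
    using stoch_reach_set_if_policy assms(6) \<open>y \<in> T k\<close> by blast
qed

end
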